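(* Let $[\mathbf{K}_0]=\{[\mathbf{K}_0(\mathbf{x})],\mathbf{x}\in D\}$ be any random field in $\mathcal{C}^+_n$ and let $[\mathbf{K}]$ be defined for all $\mathbf{x}\in D$ by $$[\mathbf{K}(\mathbf{x})]=\frac{1}{1+\varepsilon}[\underline L(\mathbf{x})]^T\{\varepsilon[I_n]+[\mathbf{K}_0(\mathbf{x})]\}[\underline L(\mathbf{x})].$$ Then: (i) for all $\mathbf{x}\in D$, $\|\mathbf{K}(\mathbf{x})\|_F\le \frac{\underline k_1}{1+\varepsilon}(\sqrt{n}\,\varepsilon+\|\mathbf{K}_0(\mathbf{x})\|_F)$ almost surely; (ii) for all $\mathbf{z}\in\mathbb{R}^n$ and all $\mathbf{x}\in D$, $\underline k_\varepsilon\|\mathbf{z}\|_2^2\le\langle[\mathbf{K}(\mathbf{x})]\mathbf{z},\mathbf{z}\rangle_2$ almost surely, where $\underline k_\varepsilon=\underline k_0\,\varepsilon/(1+\varepsilon)$ is a positive constant independent of $\mathbf{x}$; (iii) for all $\mathbf{x}\in D$, $\|[\mathbf{K}(\mathbf{x})]^{-1}\|_F\le\frac{\sqrt{n}(1+\varepsilon)}{\varepsilon}\,\mathrm{tr}([\underline K(\mathbf{x})]^{-1})$ almost surely; consequently, for every integer $p\ge1$ and all $\mathbf{x}\in D$, $E\{\|[\mathbf{K}(\mathbf{x})]^{-1}\|_F^p\}<+\infty$ (in particular $\{[\mathbf{K}(\mathbf{x})]^{-1},\mathbf{x}\in D\}$ is a second-order random field).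
   Context: Let $d\ge1$, $n\ge1$ be integers and $D\subset\mathbb{R}^d$ a bounded open domain. $\mathbb{M}_n^+(\mathbb{R})$ denotes the set of symmetric positive-definite real $n\times n$ matrices, $\|\cdot\|_F$ the Frobenius norm, $\|\cdot\|_2$ and $\langle\cdot,\cdot\rangle_2$ the Euclidean norm and inner product, $[I_n]$ the identity matrix. $\mathcal{C}^+_n$ is the set of all random fields $\{[\mathbf{K}(\mathbf{x})],\mathbf{x}\in D\}$ defined on a probability space $(\Theta,\mathcal{T},\mathcal{P})$ with values in $\mathbb{M}_n^+(\mathbb{R})$. Let $\mathbf{x}\mapsto[\underline K(\mathbf{x})]$ be a function from $D$ into $\mathbb{M}_n^+(\mathbb{R})$ such that for all $\mathbf{x}\in D$ and $\mathbf{z}\in\mathbb{R}^n$, $\underline k_0\|\mathbf{z}\|_2^2\le\langle[\underline K(\mathbf{x})]\mathbf{z},\mathbf{z}\rangle_2\le n^{-1/2}\widetilde{\underline k}_1\|\mathbf{z}\|_2^2$, with constants $0<\underline k_0<\widetilde{\underline k}_1<+\infty$ independent of $\mathbf{x}$; set $\underline k_1=n\,\widetilde{\underline k}_1$. $[\underline L(\mathbf{x})]$ is the upper triangular real matrix with $[\underline K(\mathbf{x})]=[\underline L(\mathbf{x})]^T[\underline L(\mathbf{x})]$. $\varepsilon>0$ is a fixed real number. *)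

theory Defs
  imports "HOL-Analysis.Analysis" "HOL-Probability.Probability"
begin

definition frob_norm :: "real^'n^'n \<Rightarrow> real" where
  "frob_norm A = sqrt (\<Sum>i\<in>UNIV. \<Sum>j\<in>UNIV. (A $ i $ j)\<^sup>2)"

definition spd :: "real^'n^'n \<Rightarrow> bool" where
  "spd A \<longleftrightarrow> transpose A = A \<and> (\<forall>z. z \<noteq> 0 \<longrightarrow> (A *v z) \<bullet> z > 0)"

definition upper_triangular :: "real^('n::{finite,linorder})^('n::{finite,linorder}) \<Rightarrow> bool" where
  "upper_triangular A \<longleftrightarrow> (\<forall>i j. j < i \<longrightarrow> A $ i $ j = 0)"

definition Kfield :: "real \<Rightarrow> ('x \<Rightarrow> real^'n^'n) \<Rightarrow> ('w \<Rightarrow> 'x \<Rightarrow> real^'n^'n)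
    \<Rightarrow> 'w \<Rightarrow> 'x \<Rightarrow> real^'n^'n" where
  "Kfield eps L K0 \<omega> x =
     (1 / (1 + eps)) *\<^sub>R (transpose (L x) ** (eps *\<^sub>R mat 1 + K0 \<omega> x) ** L x)"

end

theory Submission imports Defs begin

text \<open>Write \<open>K = (1+\<epsilon>)\<^sup>-\<^sup>1 L\<^sup>T A L\<close> with \<open>A = \<epsilon>I + K\<^sub>0 \<ge> \<epsilon>I\<close>. The Frobenius norm is
  submultiplicative against operator bounds, and the upper bound on \<open>K\<^sub>b = L\<^sup>T L\<close> bounds \<open>L\<close> as
  an operator, which gives (i). Since \<open>\<langle>Kz,z\<rangle> = \<langle>A(Lz),Lz\<rangle>/(1+\<epsilon>) \<ge> \<epsilon>|Lz|\<^sup>2/(1+\<epsilon>)\<close>, the lower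
  bound on \<open>K\<^sub>b\<close> gives (ii). Finally \<open>K\<^sup>-\<^sup>1 = (1+\<epsilon>) L\<^sup>-\<^sup>1 A\<^sup>-\<^sup>1 L\<^sup>-\<^sup>T\<close> with \<open>A\<^sup>-\<^sup>1\<close> of operator
  norm at most \<open>1/\<epsilon>\<close>, so \<open>\<parallel>K\<^sup>-\<^sup>1\<parallel>\<^sub>F \<le> (1+\<epsilon>)/\<epsilon> \<parallel>L\<^sup>-\<^sup>1\<parallel>\<^sub>F\<^sup>2 = (1+\<epsilon>)/\<epsilon> tr(K\<^sub>b\<^sup>-\<^sup>1)\<close>. This bound is
  deterministic, so every moment of \<open>\<parallel>K\<^sup>-\<^sup>1\<parallel>\<^sub>F\<close> is finite once it is known to be measurable,
  which follows from Cramer's rule.\<close>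

lemma norm_matrix_eq_sqrt_sum_squares:
  "norm (A::real^'n^'m) = sqrt (\<Sum>i\<in>UNIV. \<Sum>j\<in>UNIV. (A$i$j)\<^sup>2)"
  by (simp add: norm_vec_def L2_set_def sum_nonneg)

lemma frob_norm_eq_norm: "frob_norm (A::real^'n^'n) = norm A"
  by (simp add: frob_norm_def norm_matrix_eq_sqrt_sum_squares)

lemma norm_transpose_matrix: "norm (transpose (A::real^'n^'m)) = norm A"
  unfolding norm_matrix_eq_sqrt_sum_squares transpose_def
  by (subst sum.swap) simp

lemma norm_mat_1: "norm (mat 1 :: real^'n^'n) = sqrt (real CARD('n))"
proof -
  have "(\<Sum>j\<in>UNIV. ((mat 1 :: real^'n^'n) $ i $ j)\<^sup>2) = 1" for i
    by (simp add: mat_def if_distrib[of "\<lambda>x. x\<^sup>2"] cong: if_cong)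
  then show ?thesis by (simp add: norm_matrix_eq_sqrt_sum_squares)
qed

lemma norm_matrix_vector_mult_le: "norm ((A::real^'n^'m) *v v) \<le> norm A * norm v"
proof -
  have "norm (A *v v) = L2_set (\<lambda>i. \<bar>A$i \<bullet> v\<bar>) UNIV"
    by (simp add: norm_vec_def matrix_vector_mul_component)
  also have "\<dots> \<le> L2_set (\<lambda>i. norm v * norm (A$i)) UNIV"
    by (rule L2_set_mono) (simp_all add: Cauchy_Schwarz_ineq2[of "A$_" v, simplified mult.commute])
  also have "\<dots> = norm v * norm A" by (simp add: L2_set_right_distrib norm_vec_def)
  finally show ?thesis by (simp add: mult.commute)
qed

lemma inner_transpose_matrix_vector: "(transpose (A::real^'n^'m) *v w) \<bullet> v = w \<bullet> (A *v v)"
  by (simp add: dot_lmul_matrix flip: vector_transpose_matrix)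

lemma norm_transpose_matrix_vector_le:
  fixes A :: "real^'n^'m"
  assumes "\<And>v. norm (A *v v) \<le> s * norm v" "0 \<le> s"
  shows "norm (transpose A *v w) \<le> s * norm w"
proof -
  let ?u = "transpose A *v w"
  have "(norm ?u)\<^sup>2 = w \<bullet> (A *v ?u)"
    by (simp only: power2_norm_eq_inner inner_transpose_matrix_vector)
  also have "\<dots> \<le> norm w * (s * norm ?u)"
    using norm_cauchy_schwarz[of w "A *v ?u"] assms(1)[of ?u] by (simp add: order_trans mult_left_mono)
  finally have "norm ?u * norm ?u \<le> (s * norm w) * norm ?u"
    by (simp add: power2_eq_square algebra_simps)
  then show ?thesis
    using assms(2) by (cases "norm ?u = 0") auto
qed

lemma norm_matrix_mult_right_le:
  fixes B :: "real^'k^'m" and A :: "real^'n^'k"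
  assumes "\<And>v. norm (transpose A *v v) \<le> s * norm v" "0 \<le> s"
  shows "norm (B ** A) \<le> s * norm B"
proof -
  have rows: "(B ** A) $ i = transpose A *v B $ i" for i
    by (simp add: vec_eq_iff matrix_matrix_mult_def matrix_vector_mult_def transpose_def mult.commute)
  have "norm (B ** A) = L2_set (\<lambda>i. norm (transpose A *v B$i)) UNIV"
    by (simp add: norm_vec_def rows)
  also have "\<dots> \<le> L2_set (\<lambda>i. s * norm (B$i)) UNIV"
    by (rule L2_set_mono) (use assms(1) in auto)
  also have "\<dots> = s * norm B" by (simp add: L2_set_right_distrib norm_vec_def assms)
  finally show ?thesis .
qed



lemma norm_matrix_mult_left_le:
  fixes A :: "real^'k^'m" and B :: "real^'n^'k"
  assumes "\<And>v. norm (A *v v) \<le> s * norm v" "0 \<le> s"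
  shows "norm (A ** B) \<le> s * norm B"
proof -
  have "norm (A ** B) = norm (transpose (transpose B ** transpose A))"
    by (simp add: matrix_transpose_mul transpose_transpose)
  also have "\<dots> = norm (transpose B ** transpose A)"
    by (rule norm_transpose_matrix)
  also have "\<dots> \<le> s * norm B"
    using norm_matrix_mult_right_le[of "transpose A" s "transpose B"] assms
    by (simp add: transpose_transpose norm_transpose_matrix)
  finally show ?thesis .
qed

lemma norm_matrix_mult_le: "norm ((A::real^'k^'m) ** (B::real^'n^'k)) \<le> norm A * norm B"
  by (rule norm_matrix_mult_left_le) (auto simp: norm_matrix_vector_mult_le)

lemma matrix_inv_unique:
  fixes A B :: "real^'n^'n"
  assumes "A ** B = mat 1"
  shows "matrix_inv A = B"
proof -
  have "B ** A = mat 1" using assms matrix_left_right_inverse by blast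
  then have "\<exists>X. A ** X = mat 1 \<and> X ** A = mat 1" using assms by blast
  then have inv: "A ** matrix_inv A = mat 1 \<and> matrix_inv A ** A = mat 1"
    unfolding matrix_inv_def by (rule someI_ex)
  have "matrix_inv A = matrix_inv A ** (A ** B)" by (simp add: assms)
  also have "\<dots> = B" by (simp add: matrix_mul_assoc inv)
  finally show ?thesis .
qed

lemma matrix_inv_right:
  fixes A :: "real^'n^'n"
  assumes "invertible A"
  shows "A ** matrix_inv A = mat 1"
proof -
  obtain B where "A ** B = mat 1" using assms unfolding invertible_def by blast
  then show ?thesis by (simp add: matrix_inv_unique)
qed

lemma matrix_inv_left:
  fixes A :: "real^'n^'n"
  assumes "invertible A"
  shows "matrix_inv A ** A = mat 1"
  using matrix_inv_right[OF assms] matrix_left_right_inverse by blast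

lemma transpose_mult_transpose_matrix_inv:
  fixes A :: "real^'n^'n"
  assumes "invertible A"
  shows "transpose A ** transpose (matrix_inv A) = mat 1"
  using arg_cong[OF matrix_inv_left[OF assms], of transpose]
  by (simp add: matrix_transpose_mul)

lemma matrix_inv_scaleR:
  fixes A :: "real^'n^'n"
  assumes "invertible A" "c \<noteq> 0"
  shows "matrix_inv (c *\<^sub>R A) = (1 / c) *\<^sub>R matrix_inv A"
  by (rule matrix_inv_unique)
     (simp add: assms matrix_inv_right matrix_scalar_ac scalar_matrix_assoc[symmetric])

lemma matrix_inv_entry_cramer:
  fixes A :: "real^'n^'n"
  assumes "invertible A"
  shows "matrix_inv A $ k $ j = det (\<chi> i l. if l = k then axis j 1 $ i else A$i$l) / det A"
proof -
  let ?b = "axis j 1 :: real^'n"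
  have "A *v (matrix_inv A *v ?b) = ?b"
    by (simp add: matrix_vector_mul_assoc matrix_inv_right[OF assms])
  then have "matrix_inv A *v ?b = (\<chi> k. det (\<chi> i l. if l = k then ?b$i else A$i$l) / det A)"
    using cramer[OF invertible_det_nz[THEN iffD1, OF assms]] by blast
  moreover have "matrix_inv A $ k $ j = (matrix_inv A *v ?b) $ k"
    by (simp add: matrix_vector_mult_basis column_def)
  ultimately show ?thesis by simp
qed

definition coercive_matrix :: "real \<Rightarrow> real^'n^'n \<Rightarrow> bool" where
  "coercive_matrix c A \<longleftrightarrow> (\<forall>w. c * (norm w)\<^sup>2 \<le> (A *v w) \<bullet> w)"

lemma coercive_matrix_scaleR:
  assumes "coercive_matrix c A" "0 \<le> r"
  shows "coercive_matrix (r * c) (r *\<^sub>R A)"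
  using assms mult_left_mono unfolding coercive_matrix_def
  by (fastforce simp: scaleR_matrix_vector_assoc[symmetric] mult.assoc)

lemma coercive_shift_spd:
  fixes A0 :: "real^'n^'n"
  assumes "spd A0" "0 \<le> eps"
  shows "coercive_matrix eps (eps *\<^sub>R mat 1 + A0)"
  unfolding coercive_matrix_def
proof
  fix w :: "real^'n"
  have "0 \<le> (A0 *v w) \<bullet> w"
    using assms(1) unfolding spd_def by (cases "w = 0") (auto intro: less_imp_le)
  then show "eps * (norm w)\<^sup>2 \<le> ((eps *\<^sub>R mat 1 + A0) *v w) \<bullet> w"
    by (simp add: matrix_vector_mult_add_rdistrib scaleR_matrix_vector_assoc[symmetric]
        inner_add_left power2_norm_eq_inner)
qed

lemma coercive_matrix_imp_invertible:
  assumes "coercive_matrix c A" "0 < c"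
  shows "invertible A"
proof -
  have "v = 0" if "A *v v = 0" for v
  proof -
    have "c * (norm v)\<^sup>2 \<le> 0"
      using assms(1) that unfolding coercive_matrix_def by (metis inner_zero_left)
    then show "v = 0" using assms(2) by (simp add: mult_le_0_iff)
  qed
  then show ?thesis
    using matrix_left_invertible_ker invertible_left_inverse by blast
qed

lemma norm_coercive_matrix_inv_le:
  assumes "coercive_matrix c A" "0 < c"
  shows "norm (matrix_inv A *v v) \<le> (1 / c) * norm v"
proof -
  let ?w = "matrix_inv A *v v"
  have "invertible A" using coercive_matrix_imp_invertible assms .
  then have "A *v ?w = v"
    by (simp add: matrix_vector_mul_assoc matrix_inv_right)
  then have "c * (norm ?w)\<^sup>2 \<le> v \<bullet> ?w"
    using assms(1) unfolding coercive_matrix_def by metis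
  also have "\<dots> \<le> norm v * norm ?w"
    by (rule norm_cauchy_schwarz)
  finally have "(c * norm ?w) * norm ?w \<le> norm v * norm ?w"
    by (simp add: power2_eq_square mult.assoc)
  then have "c * norm ?w \<le> norm v"
    using mult_right_le_imp_le[of "c * norm ?w" "norm ?w" "norm v"] by (cases "?w = 0") auto
  then show ?thesis using assms(2) by (simp add: field_simps)
qed

lemma inner_congruence:
  fixes L A :: "real^'n^'n"
  shows "((transpose L ** A ** L) *v z) \<bullet> z = (A *v (L *v z)) \<bullet> (L *v z)"
proof -
  have "(transpose L ** A ** L) *v z = transpose L *v (A *v (L *v z))"
    by (simp add: matrix_vector_mul_assoc matrix_mul_assoc)
  then show ?thesis by (simp only: inner_transpose_matrix_vector)
qed

lemma norm_matrix_vector_le_of_gram: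
  fixes L :: "real^'n^'n"
  assumes "\<And>z. ((transpose L ** L) *v z) \<bullet> z \<le> c * (norm z)\<^sup>2"
  shows "norm (L *v v) \<le> sqrt c * norm v"
proof -
  have "(norm (L *v v))\<^sup>2 \<le> c * (norm v)\<^sup>2"
    using assms[of v] inner_congruence[of L "mat 1" v] by (simp add: power2_norm_eq_inner)
  then have "sqrt ((norm (L *v v))\<^sup>2) \<le> sqrt (c * (norm v)\<^sup>2)"
    by (rule real_sqrt_le_mono)
  then show ?thesis by (simp add: real_sqrt_mult)
qed

lemma invertible_of_coercive_gram:
  fixes L :: "real^'n^'n"
  assumes "coercive_matrix k (transpose L ** L)" "0 < k"
  shows "invertible L"
proof -
  have "matrix_inv (transpose L ** L) ** transpose L ** L = mat 1"
    using matrix_inv_left[OF coercive_matrix_imp_invertible[OF assms]]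
    by (simp add: matrix_mul_assoc)
  then show ?thesis
    using invertible_left_inverse by blast
qed

lemma norm_congruence_le:
  fixes L A :: "real^'n^'n"
  assumes "\<And>v. norm (L *v v) \<le> s * norm v" "0 \<le> s"
  shows "norm (transpose L ** A ** L) \<le> s\<^sup>2 * norm A"
proof -
  have LT: "norm (transpose L *v v) \<le> s * norm v" for v
    by (rule norm_transpose_matrix_vector_le[OF assms])
  have "norm (transpose L ** (A ** L)) \<le> s * norm (A ** L)"
    by (rule norm_matrix_mult_left_le[OF LT assms(2)])
  also have "\<dots> \<le> s * (s * norm A)"
    by (intro mult_left_mono norm_matrix_mult_right_le[OF LT] assms(2))
  finally show ?thesis by (simp add: matrix_mul_assoc power2_eq_square)
qed

lemma coercive_congruence:
  fixes L A :: "real^'n^'n"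
  assumes "coercive_matrix c A" "0 \<le> c" "coercive_matrix k (transpose L ** L)"
  shows "coercive_matrix (c * k) (transpose L ** A ** L)"
  unfolding coercive_matrix_def
proof
  fix z
  have "k * (norm z)\<^sup>2 \<le> ((transpose L ** L) *v z) \<bullet> z"
    using assms(3) unfolding coercive_matrix_def by blast
  also have "\<dots> = (norm (L *v z))\<^sup>2"
    using inner_congruence[of L "mat 1" z] by (simp add: power2_norm_eq_inner)
  finally have "k * (norm z)\<^sup>2 \<le> (norm (L *v z))\<^sup>2" .
  then have "c * k * (norm z)\<^sup>2 \<le> c * (norm (L *v z))\<^sup>2"
    using assms(2) by (simp add: mult.assoc mult_left_mono)
  also have "\<dots> \<le> (A *v (L *v z)) \<bullet> (L *v z)"
    using assms(1) by (simp add: coercive_matrix_def)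
  finally show "c * k * (norm z)\<^sup>2 \<le> ((transpose L ** A ** L) *v z) \<bullet> z"
    by (simp add: inner_congruence)
qed

lemma norm_congruence_inverse_le:
  fixes L A :: "real^'n^'n"
  assumes "invertible L" "coercive_matrix c A" "0 < c"
  shows "norm (matrix_inv (transpose L ** A ** L)) \<le> (norm (matrix_inv L))\<^sup>2 / c"
proof -
  let ?Li = "matrix_inv L" and ?Ai = "matrix_inv A"
  have "invertible A" using coercive_matrix_imp_invertible assms(2,3) .
  then have A: "X ** A ** ?Ai = X" for X
    by (simp add: matrix_inv_right flip: matrix_mul_assoc)
  have L: "X ** L ** ?Li = X" for X
    by (simp add: matrix_inv_right[OF assms(1)] flip: matrix_mul_assoc)
  note LT = transpose_mult_transpose_matrix_inv[OF assms(1)]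
  have "transpose L ** A ** L ** (?Li ** ?Ai ** transpose ?Li) = mat 1"
    by (simp add: matrix_mul_assoc A L LT)
  then have "matrix_inv (transpose L ** A ** L) = ?Li ** (?Ai ** transpose ?Li)"
    by (simp add: matrix_inv_unique matrix_mul_assoc)
  also have "norm \<dots> \<le> norm ?Li * norm (?Ai ** transpose ?Li)"
    by (rule norm_matrix_mult_le)
  also have "\<dots> \<le> norm ?Li * ((1 / c) * norm (transpose ?Li))"
    using assms(2,3) by (intro mult_left_mono norm_matrix_mult_left_le norm_coercive_matrix_inv_le) auto
  finally show ?thesis by (simp add: norm_transpose_matrix power2_eq_square)
qed

lemma trace_matrix_inv_gram:
  fixes L :: "real^'n^'n"
  assumes "invertible L"
  shows "trace (matrix_inv (transpose L ** L)) = (norm (matrix_inv L))\<^sup>2"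
proof -
  let ?Li = "matrix_inv L"
  have "transpose L ** L ** (?Li ** transpose ?Li) = transpose L ** (L ** ?Li) ** transpose ?Li"
    by (simp add: matrix_mul_assoc)
  also have "\<dots> = mat 1"
    by (simp add: matrix_inv_right[OF assms] transpose_mult_transpose_matrix_inv[OF assms])
  finally have "matrix_inv (transpose L ** L) = ?Li ** transpose ?Li"
    by (rule matrix_inv_unique)
  then show ?thesis
    by (simp add: trace_def matrix_matrix_mult_def transpose_def norm_matrix_eq_sqrt_sum_squares
        sum_nonneg power2_eq_square)
qed

lemma norm_Kfield_le:
  fixes L :: "'x \<Rightarrow> real^'n^'n"
  defines "n \<equiv> real CARD('n)"
  assumes upper: "\<And>z. ((transpose (L x) ** L x) *v z) \<bullet> z \<le> k1t / sqrt n * (norm z)\<^sup>2"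
    and "0 \<le> k1t" "0 < eps"
  shows "norm (Kfield eps L K0 \<omega> x) \<le> n * k1t / (1 + eps) * (sqrt n * eps + norm (K0 \<omega> x))"
proof -
  define c where "c = k1t / sqrt n"
  have n: "1 \<le> n" "1 \<le> sqrt n" unfolding n_def by (simp_all add: Suc_le_eq)
  have "c \<le> k1t"
    unfolding c_def using n \<open>0 \<le> k1t\<close> by (simp add: divide_le_eq mult_le_cancel_left1)
  also have "k1t \<le> n * k1t" using mult_right_mono[OF n(1) \<open>0 \<le> k1t\<close>] by simp
  finally have c: "0 \<le> c" "c \<le> n * k1t"
    unfolding c_def using \<open>0 \<le> k1t\<close> n by simp_all
  have "norm (Kfield eps L K0 \<omega> x)
      = 1 / (1 + eps) * norm (transpose (L x) ** (eps *\<^sub>R mat 1 + K0 \<omega> x) ** L x)"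
    using \<open>0 < eps\<close> by (simp add: Kfield_def)
  also have "\<dots> \<le> 1 / (1 + eps) * ((sqrt c)\<^sup>2 * norm (eps *\<^sub>R mat 1 + K0 \<omega> x))"
  proof -
    have "norm (L x *v v) \<le> sqrt c * norm v" for v
      by (rule norm_matrix_vector_le_of_gram) (use upper in \<open>simp add: c_def\<close>)
    then show ?thesis
      using \<open>0 < eps\<close> c(1) by (intro mult_left_mono norm_congruence_le) auto
  qed
  also have "\<dots> \<le> 1 / (1 + eps) * (n * k1t * (sqrt n * eps + norm (K0 \<omega> x)))"
  proof -
    have "norm (eps *\<^sub>R mat 1 + K0 \<omega> x) \<le> sqrt n * eps + norm (K0 \<omega> x)"
      using norm_triangle_ineq[of "eps *\<^sub>R mat 1" "K0 \<omega> x"] \<open>0 < eps\<close>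
      by (simp add: norm_mat_1 n_def mult.commute)
    then show ?thesis
      using c \<open>0 < eps\<close> by (intro mult_left_mono mult_mono) auto
  qed
  finally show ?thesis by simp
qed

lemma coercive_Kfield:
  assumes "coercive_matrix k0 (transpose (L x) ** L x)" "0 \<le> k0" "0 < eps" "spd (K0 \<omega> x)"
  shows "coercive_matrix (k0 * eps / (1 + eps)) (Kfield eps L K0 \<omega> x)"
proof -
  have "coercive_matrix (1 / (1 + eps) * (eps * k0)) (Kfield eps L K0 \<omega> x)"
    unfolding Kfield_def using assms
    by (intro coercive_matrix_scaleR coercive_congruence coercive_shift_spd) auto
  then show ?thesis by (simp add: mult.commute)
qed

lemma norm_matrix_inv_Kfield_le:
  fixes L :: "'x \<Rightarrow> real^'n^'n"
  assumes gram: "coercive_matrix k0 (transpose (L x) ** L x)" and "0 < k0" "0 < eps"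
    and "spd (K0 \<omega> x)"
  shows "norm (matrix_inv (Kfield eps L K0 \<omega> x))
    \<le> sqrt (real CARD('n)) * (1 + eps) / eps * trace (matrix_inv (transpose (L x) ** L x))"
proof -
  let ?A = "eps *\<^sub>R mat 1 + K0 \<omega> x"
  have A: "coercive_matrix eps ?A" using assms by (simp add: coercive_shift_spd)
  have L: "invertible (L x)" using invertible_of_coercive_gram[OF gram \<open>0 < k0\<close>] .
  have "invertible (transpose (L x) ** ?A ** L x)"
    using coercive_matrix_imp_invertible[OF coercive_congruence[OF A _ gram]] assms by simp
  then have "norm (matrix_inv (Kfield eps L K0 \<omega> x))
      = (1 + eps) * norm (matrix_inv (transpose (L x) ** ?A ** L x))"
    using \<open>0 < eps\<close> by (simp add: Kfield_def matrix_inv_scaleR)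
  also have "\<dots> \<le> (1 + eps) * ((norm (matrix_inv (L x)))\<^sup>2 / eps)"
    using \<open>0 < eps\<close> by (intro mult_left_mono norm_congruence_inverse_le[OF L A]) auto
  also have "\<dots> = 1 * ((1 + eps) / eps * trace (matrix_inv (transpose (L x) ** L x)))"
    by (simp add: trace_matrix_inv_gram[OF L])
  also have "\<dots> \<le> sqrt (real CARD('n)) * ((1 + eps) / eps * trace (matrix_inv (transpose (L x) ** L x)))"
    using \<open>0 < eps\<close> by (intro mult_right_mono) (simp_all add: trace_matrix_inv_gram[OF L] Suc_le_eq)
  finally show ?thesis by simp
qed

lemma borel_measurable_matrix_entry:
  fixes F :: "'w \<Rightarrow> real^'n^'m"
  assumes "F \<in> borel_measurable M"
  shows "(\<lambda>\<omega>. F \<omega> $ i $ j) \<in> borel_measurable M"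
proof -
  have "(\<lambda>A::real^'n^'m. A $ i $ j) \<in> borel_measurable borel"
    by (intro borel_measurable_continuous_onI linear_continuous_on
        bounded_linear_compose[OF bounded_linear_vec_nth bounded_linear_vec_nth])
  with assms show ?thesis by (rule measurable_compose)
qed

lemma borel_measurable_det:
  fixes F :: "'w \<Rightarrow> real^'n^'n"
  assumes "\<And>i j. (\<lambda>\<omega>. F \<omega> $ i $ j) \<in> borel_measurable M"
  shows "(\<lambda>\<omega>. det (F \<omega>)) \<in> borel_measurable M"
  unfolding det_def by (intro borel_measurable_sum borel_measurable_times borel_measurable_prod
      borel_measurable_const assms)

lemma borel_measurable_matrix_inv_entry:
  fixes F :: "'w \<Rightarrow> real^'n^'n"
  assumes "\<And>i j. (\<lambda>\<omega>. F \<omega> $ i $ j) \<in> borel_measurable M"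
    and "\<And>\<omega>. \<omega> \<in> space M \<Longrightarrow> invertible (F \<omega>)"
  shows "(\<lambda>\<omega>. matrix_inv (F \<omega>) $ k $ j) \<in> borel_measurable M"
proof (rule measurable_cong[THEN iffD2])
  show "matrix_inv (F \<omega>) $ k $ j
      = det (\<chi> i l. if l = k then axis j 1 $ i else F \<omega> $i$l) / det (F \<omega>)"
    if "\<omega> \<in> space M" for \<omega>
    using matrix_inv_entry_cramer[OF assms(2)[OF that]] .
  have "(\<lambda>\<omega>. (\<chi> i l. if l = k then axis j 1 $ i else F \<omega> $i$l) $ a $ b) \<in> borel_measurable M"
    for a b by (cases "b = k") (simp_all add: assms(1))
  then show "(\<lambda>\<omega>. det (\<chi> i l. if l = k then axis j 1 $ i else F \<omega> $i$l) / det (F \<omega>))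
      \<in> borel_measurable M"
    by (intro borel_measurable_divide borel_measurable_det assms(1))
qed

lemma borel_measurable_frob_norm_matrix_inv:
  fixes F :: "'w \<Rightarrow> real^'n^'n"
  assumes "\<And>i j. (\<lambda>\<omega>. F \<omega> $ i $ j) \<in> borel_measurable M"
    and "\<And>\<omega>. \<omega> \<in> space M \<Longrightarrow> invertible (F \<omega>)"
  shows "(\<lambda>\<omega>. frob_norm (matrix_inv (F \<omega>))) \<in> borel_measurable M"
  unfolding frob_norm_def
  by (intro measurable_compose[OF _ borel_measurable_sqrt] borel_measurable_sum
      borel_measurable_power borel_measurable_matrix_inv_entry assms)

lemma borel_measurable_Kfield_entry:
  assumes "(\<lambda>\<omega>. K0 \<omega> x) \<in> borel_measurable M"
  shows "(\<lambda>\<omega>. Kfield eps L K0 \<omega> x $ i $ j) \<in> borel_measurable M"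
proof -
  have [measurable]: "(\<lambda>\<omega>. K0 \<omega> x $ a $ b) \<in> borel_measurable M" for a b
    using borel_measurable_matrix_entry[OF assms] .
  show ?thesis
    unfolding Kfield_def by (simp add: matrix_matrix_mult_def) measurable
qed

theorem lemma1:
  fixes M :: "'w measure"
    and D :: "'d::euclidean_space set"
    and Kb L :: "'d \<Rightarrow> real^('n::{finite,linorder})^('n::{finite,linorder})"
    and K0 :: "'w \<Rightarrow> 'd \<Rightarrow> real^('n::{finite,linorder})^('n::{finite,linorder})"
    and k0 k1t eps :: real
  assumes "prob_space M"
    and "open D" and "bounded D"
    and Kb_spd: "\<And>x. x \<in> D \<Longrightarrow> spd (Kb x)"
    and Kb_bounds: "\<And>x z. x \<in> D \<Longrightarrow>
           k0 * (norm z)\<^sup>2 \<le> (Kb x *v z) \<bullet> z \<and>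
           (Kb x *v z) \<bullet> z \<le> k1t / sqrt (real CARD('n::{finite,linorder})) * (norm z)\<^sup>2"
    and "0 < k0" and "k0 < k1t"
    and L_tri: "\<And>x. x \<in> D \<Longrightarrow> upper_triangular (L x)"
    and L_diag: "\<And>x i. x \<in> D \<Longrightarrow> L x $ i $ i > 0"
    and L_chol: "\<And>x. x \<in> D \<Longrightarrow> Kb x = transpose (L x) ** L x"
    and K0_rv: "\<And>x. x \<in> D \<Longrightarrow> (\<lambda>\<omega>. K0 \<omega> x) \<in> borel_measurable M"
    and K0_spd: "\<And>x \<omega>. x \<in> D \<Longrightarrow> \<omega> \<in> space M \<Longrightarrow> spd (K0 \<omega> x)"
    and "0 < eps"
  shows "(\<forall>x\<in>D. AE \<omega> in M. frob_norm (Kfield eps L K0 \<omega> x)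
              \<le> (real CARD('n::{finite,linorder}) * k1t) / (1 + eps)
                  * (sqrt (real CARD('n::{finite,linorder})) * eps + frob_norm (K0 \<omega> x)))
       \<and> 0 < k0 * eps / (1 + eps)
       \<and> (\<forall>z. \<forall>x\<in>D. AE \<omega> in M.
              k0 * eps / (1 + eps) * (norm z)\<^sup>2 \<le> (Kfield eps L K0 \<omega> x *v z) \<bullet> z)
       \<and> (\<forall>x\<in>D. AE \<omega> in M. frob_norm (matrix_inv (Kfield eps L K0 \<omega> x))
              \<le> sqrt (real CARD('n::{finite,linorder})) * (1 + eps) / eps * trace (matrix_inv (Kb x)))
       \<and> (\<forall>p::nat. p \<ge> 1 \<longrightarrow> (\<forall>x\<in>D.
              integrable M (\<lambda>\<omega>. frob_norm (matrix_inv (Kfield eps L K0 \<omega> x)) ^ p)))"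
proof -
  let ?K = "\<lambda>\<omega> x. Kfield eps L K0 \<omega> x"
  have gram: "coercive_matrix k0 (transpose (L x) ** L x)" if "x \<in> D" for x
    using Kb_bounds[OF that] L_chol[OF that] by (simp add: coercive_matrix_def)
  have pos: "0 < k0 * eps / (1 + eps)" using \<open>0 < k0\<close> \<open>0 < eps\<close> by simp
  have coercive: "coercive_matrix (k0 * eps / (1 + eps)) (?K \<omega> x)"
    if x: "x \<in> D" and \<omega>: "\<omega> \<in> space M" for x \<omega>
    using coercive_Kfield[of k0 L x eps K0 \<omega>, OF gram[OF x] _ \<open>0 < eps\<close> K0_spd[OF x \<omega>]] \<open>0 < k0\<close> by simp
  have inverse: "frob_norm (matrix_inv (?K \<omega> x))
        \<le> sqrt (real CARD('n)) * (1 + eps) / eps * trace (matrix_inv (Kb x))"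
    if x: "x \<in> D" and \<omega>: "\<omega> \<in> space M" for x \<omega>
    using norm_matrix_inv_Kfield_le[of k0 L x eps K0 \<omega>, OF gram[OF x] \<open>0 < k0\<close> \<open>0 < eps\<close> K0_spd[OF x \<omega>]]
    by (simp add: frob_norm_eq_norm L_chol[OF x])
  have "frob_norm (?K \<omega> x)
      \<le> real CARD('n) * k1t / (1 + eps) * (sqrt (real CARD('n)) * eps + frob_norm (K0 \<omega> x))"
    if x: "x \<in> D" for x \<omega>
    using norm_Kfield_le[of L x k1t eps K0 \<omega>] Kb_bounds[OF x] L_chol[OF x] \<open>0 < k0\<close> \<open>k0 < k1t\<close> \<open>0 < eps\<close>
    by (simp add: frob_norm_eq_norm)
  moreover have "integrable M (\<lambda>\<omega>. frob_norm (matrix_inv (?K \<omega> x)) ^ p)" if x: "x \<in> D" for x p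
  proof (rule finite_measure.integrable_const_bound)
    show "finite_measure M" using \<open>prob_space M\<close> by (rule prob_space.finite_measure)
    show "AE \<omega> in M. norm (frob_norm (matrix_inv (?K \<omega> x)) ^ p)
        \<le> (sqrt (real CARD('n)) * (1 + eps) / eps * trace (matrix_inv (Kb x))) ^ p"
      using inverse[OF x] by (intro AE_I2) (simp add: frob_norm_eq_norm power_mono)
    show "(\<lambda>\<omega>. frob_norm (matrix_inv (?K \<omega> x)) ^ p) \<in> borel_measurable M"
      using coercive_matrix_imp_invertible[OF coercive[OF x] pos]
      by (intro borel_measurable_power borel_measurable_frob_norm_matrix_inv
          borel_measurable_Kfield_entry K0_rv x)
  qed
  ultimately show ?thesis
    using coercive inverse pos by (auto simp: coercive_matrix_def)
qed

end
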